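(* Let $\Omega\subset\mathbb{R}^N$ be a uniformly smooth domain with outer unit normal $\nu$. Let $v_1\in W^{1,\infty}(\Omega\times\mathbb{R})$ and $v_2\in C^1(\overline\Omega\times\mathbb{R})$ satisfy: $v_1\le v_2$ on $\partial\Omega\times\mathbb{R}$; the spatial gradient $\nabla v_2$ is uniformly continuous on $\overline\Omega\times\mathbb{R}$; $$\sup_{\partial\Omega\times\mathbb{R}}\big(v_1-v_2+\min(\partial_\nu v_2,0)\big)<0;$$ and for every $\varepsilon>0$, $\inf\{v_2(x,t):\ \mathrm{dist}(x,\mathbb{R}^N\setminus\Omega)>\varepsilon,\ t\in\mathbb{R}\}>0$. Then there is a constant $k>0$ such that $kv_2\ge v_1$ in $\Omega\times\mathbb{R}$.
   Context: $\partial_\nu v_2=\nu\cdot\nabla v_2$ denotes the outer normal derivative on $\partial\Omega$. *)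

theory Defs
  imports "HOL-Analysis.Analysis"
begin

definition hproj :: "'a::euclidean_space \<Rightarrow> 'a \<Rightarrow> 'a" where
  "hproj e w = w - (w \<bullet> e) *\<^sub>R e"

definition unif_smooth_domain :: "'a::euclidean_space set \<Rightarrow> bool" where
  "unif_smooth_domain \<Omega> \<longleftrightarrow> open \<Omega> \<and> connected \<Omega> \<and> \<Omega> \<noteq> {} \<and>
    (\<exists>r>0. \<exists>M. \<forall>z\<in>frontier \<Omega>. \<exists>e \<phi> g H.
       norm e = 1 \<and> \<phi> 0 = 0 \<and>
       (\<forall>w. (\<phi> has_derivative (\<lambda>h. g w \<bullet> h)) (at w)) \<and>
       (\<forall>w. (g has_derivative H w) (at w)) \<and>
       (\<forall>v. continuous_on UNIV (\<lambda>w. H w v)) \<and>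
       (\<forall>w. norm (g w) \<le> M \<and> onorm (H w) \<le> M) \<and>
       (\<forall>y\<in>ball z r. y \<in> \<Omega> \<longleftrightarrow> \<phi> (hproj e (y - z)) < (y - z) \<bullet> e))"

text \<open>nu is the outer unit normal field of Omega: at each boundary point z, nu z is a unit vector
  and Omega is asymptotically the half-space {y. (y - z) . nu z < 0} near z.\<close>
definition outer_unit_normal :: "'a::euclidean_space set \<Rightarrow> ('a \<Rightarrow> 'a) \<Rightarrow> bool" where
  "outer_unit_normal \<Omega> \<nu> \<longleftrightarrow> (\<forall>z\<in>frontier \<Omega>. norm (\<nu> z) = 1 \<and>
     (\<forall>\<epsilon>>0. \<exists>\<delta>>0. \<forall>y\<in>ball z \<delta>.
        (y \<in> \<Omega> \<longrightarrow> (y - z) \<bullet> \<nu> z \<le> \<epsilon> * norm (y - z)) \<and>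
        (y \<notin> \<Omega> \<longrightarrow> - \<epsilon> * norm (y - z) \<le> (y - z) \<bullet> \<nu> z)))"

text \<open>W^{1,infinity}(Omega x R), via its Lipschitz representative: bounded on Omega x R and
  Lipschitz along every segment contained in Omega x R (i.e. bounded with bounded gradient).\<close>
definition W1inf :: "('a::euclidean_space \<Rightarrow> real \<Rightarrow> real) \<Rightarrow> 'a set \<Rightarrow> bool" where
  "W1inf v \<Omega> \<longleftrightarrow> (\<exists>B. \<forall>x\<in>\<Omega>. \<forall>t. \<bar>v x t\<bar> \<le> B) \<and>
     (\<exists>L. \<forall>p q. closed_segment p q \<subseteq> \<Omega> \<times> UNIV \<longrightarrow>
        \<bar>v (fst p) (snd p) - v (fst q) (snd q)\<bar> \<le> L * dist p q)"

end

theory Submission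
  imports Defs
begin

text \<open>Away from the boundary the bound is immediate: \<open>v\<^sub>1\<close> is bounded and \<open>v\<^sub>2\<close> is bounded
  below by a positive constant. A point \<open>x\<close> close to the boundary is written \<open>x = z - d \<nu>(z)\<close>
  with \<open>z\<close> a nearest boundary point. Uniform smoothness gives inward normal segments of a
  uniform length, and uniform continuity of \<open>\<nabla>v\<^sub>2\<close> makes \<open>v\<^sub>2\<close> affine along them up to a small
  error. Either \<open>\<partial>\<^sub>\<nu>v\<^sub>2(z)\<close> is very negative, and \<open>v\<^sub>2\<close> grows linearly into the domain faster than
  the Lipschitz function \<open>v\<^sub>1\<close> can; or \<open>v\<^sub>1 - v\<^sub>2\<close> is uniformly negative at \<open>z\<close>, so that where
  \<open>v\<^sub>1(x) > 0\<close> the value \<open>v\<^sub>2(z)\<close>, and hence \<open>v\<^sub>2(x)\<close>, is bounded below by a positive constant.\<close>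

section \<open>Boundary charts and outer normals\<close>

lemma hproj_scaleR: "hproj e (s *\<^sub>R u) = s *\<^sub>R hproj e u"
  unfolding hproj_def by (simp add: scaleR_diff_right)

lemma hproj_inner_commute: "hproj e a \<bullet> b = a \<bullet> hproj e b"
  unfolding hproj_def inner_diff_left inner_diff_right inner_scaleR_left inner_scaleR_right
  by (simp add: inner_commute[of e b])

lemma norm_hproj_le:
  assumes "norm e = 1"
  shows "norm (hproj e u) \<le> norm u"
proof -
  have "e \<bullet> e = 1"
    using assms by (simp add: norm_eq_1)
  then have "hproj e u \<bullet> hproj e u = u \<bullet> u - (u \<bullet> e)\<^sup>2"
    unfolding hproj_def inner_diff_left inner_diff_right inner_scaleR_left
      inner_scaleR_right inner_commute[of e u]
    by (simp add: power2_eq_square)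
  then have "(norm (hproj e u))\<^sup>2 \<le> (norm u)\<^sup>2"
    by (simp add: power2_norm_eq_inner)
  then show ?thesis
    by (rule power2_le_imp_le) simp
qed

lemma gradient_lipschitz_upper_bound:
  fixes \<phi> :: "'a::euclidean_space \<Rightarrow> real"
  assumes \<phi>: "\<And>w. (\<phi> has_derivative (\<lambda>h. g w \<bullet> h)) (at w)"
    and g: "\<And>w. (g has_derivative H w) (at w)"
    and H: "\<And>w. onorm (H w) \<le> M"
  shows "\<phi> p \<le> \<phi> q + g q \<bullet> (p - q) + M * (norm (p - q))\<^sup>2"
proof -
  define \<psi> where "\<psi> x = \<phi> x - g q \<bullet> x" for x
  have M: "0 \<le> M"
    using onorm_pos_le[OF has_derivative_bounded_linear[OF g]] H order_trans by blast
  have g_lipschitz: "norm (g x - g q) \<le> M * norm (x - q)" for x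
    by (rule differentiable_bound[of UNIV]) (auto intro: has_derivative_at_withinI g H)
  have "(\<psi> has_derivative (\<lambda>h. (g x - g q) \<bullet> h)) (at x)" for x
    unfolding \<psi>_def inner_diff_left using \<phi> by (auto intro!: derivative_eq_intros)
  then have "(\<psi> has_derivative (\<lambda>h. (g x - g q) \<bullet> h)) (at x within cball q (norm (p - q)))" for x
    by (rule has_derivative_at_withinI)
  moreover have "onorm (\<lambda>h. (g x - g q) \<bullet> h) \<le> M * norm (p - q)"
    if "x \<in> cball q (norm (p - q))" for x
  proof -
    have "onorm (\<lambda>h. (g x - g q) \<bullet> h) \<le> norm (g x - g q)"
      using onorm_inner_right[OF bounded_linear_ident, of "g x - g q"] by (simp add: onorm_id)
    also have "\<dots> \<le> M * norm (x - q)"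
      by (rule g_lipschitz)
    also have "\<dots> \<le> M * norm (p - q)"
      using that M by (intro mult_left_mono) (auto simp: dist_norm norm_minus_commute)
    finally show ?thesis .
  qed
  ultimately have "norm (\<psi> p - \<psi> q) \<le> M * norm (p - q) * norm (p - q)"
    by (intro differentiable_bound[OF convex_cball]) (auto simp: dist_norm norm_minus_commute)
  then show ?thesis
    unfolding \<psi>_def by (simp add: power2_eq_square inner_diff_right abs_le_iff mult.assoc)
qed

definition boundary_chart ::
  "'a::euclidean_space set \<Rightarrow> 'a \<Rightarrow> real \<Rightarrow> real \<Rightarrow> 'a \<Rightarrow> ('a \<Rightarrow> real) \<Rightarrow> ('a \<Rightarrow> 'a) \<Rightarrow>
    ('a \<Rightarrow> 'a \<Rightarrow> 'a) \<Rightarrow> bool"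
  where "boundary_chart \<Omega> z r M e \<phi> g H \<longleftrightarrow> norm e = 1 \<and> \<phi> 0 = 0 \<and>
    (\<forall>w. (\<phi> has_derivative (\<lambda>h. g w \<bullet> h)) (at w)) \<and> (\<forall>w. (g has_derivative H w) (at w)) \<and>
    (\<forall>w. norm (g w) \<le> M \<and> onorm (H w) \<le> M) \<and>
    (\<forall>y\<in>ball z r. y \<in> \<Omega> \<longleftrightarrow> \<phi> (hproj e (y - z)) < (y - z) \<bullet> e)"

lemma unif_smooth_domain_boundary_charts:
  assumes "unif_smooth_domain \<Omega>"
  obtains r M where "0 < r" "\<And>z. z \<in> frontier \<Omega> \<Longrightarrow> \<exists>e \<phi> g H. boundary_chart \<Omega> z r M e \<phi> g H"
  using assms unfolding unif_smooth_domain_def boundary_chart_def by metis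

text \<open>The outward, non-normalised normal at the origin of the graph of \<open>\<phi> \<circ> hproj e\<close>
  over the hyperplane orthogonal to \<open>e\<close>.\<close>
definition chart_normal :: "'a::euclidean_space \<Rightarrow> ('a \<Rightarrow> 'a) \<Rightarrow> 'a"
  where "chart_normal e g = hproj e (g 0) - e"

lemma norm_chart_normal_ge_1:
  assumes "norm e = 1"
  shows "1 \<le> norm (chart_normal e g)"
proof -
  have "chart_normal e g \<bullet> e = -1"
    using assms by (simp add: chart_normal_def hproj_def inner_diff_left norm_eq_1)
  then show ?thesis
    using Cauchy_Schwarz_ineq2[of "chart_normal e g" e] assms by simp
qed

lemma boundary_chart_ray_mem:
  assumes chart: "boundary_chart \<Omega> z r M e \<phi> g H"
    and s: "0 < s" "s * norm u < r"
    and slope: "M * s * (norm u)\<^sup>2 < - (chart_normal e g \<bullet> u)"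
  shows "z + s *\<^sub>R u \<in> \<Omega>"
proof -
  let ?p = "hproj e (s *\<^sub>R u)"
  have M: "0 \<le> M"
    using chart norm_ge_zero[of "g 0"] unfolding boundary_chart_def by (meson order_trans)
  have norm_p: "norm ?p \<le> s * norm u"
    using chart norm_hproj_le[of e "s *\<^sub>R u"] s unfolding boundary_chart_def by simp
  have "\<phi> ?p \<le> g 0 \<bullet> ?p + M * (norm ?p)\<^sup>2"
    using chart gradient_lipschitz_upper_bound[of \<phi> g H M ?p 0] unfolding boundary_chart_def by simp
  also have "\<dots> \<le> s * (hproj e (g 0) \<bullet> u) + M * (s * norm u)\<^sup>2"
    using norm_p M by (intro add_mono mult_left_mono power_mono)
      (auto simp: hproj_scaleR hproj_inner_commute[symmetric])
  also have "\<dots> < (s *\<^sub>R u) \<bullet> e"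
  proof -
    have "M * s * (norm u)\<^sup>2 < u \<bullet> e - hproj e (g 0) \<bullet> u"
      using slope unfolding chart_normal_def inner_diff_left by (simp add: inner_commute)
    then have "s * (M * s * (norm u)\<^sup>2) < s * (u \<bullet> e - hproj e (g 0) \<bullet> u)"
      using s by simp
    then show ?thesis
      by (simp add: power2_eq_square algebra_simps)
  qed
  finally have "\<phi> (hproj e (z + s *\<^sub>R u - z)) < (z + s *\<^sub>R u - z) \<bullet> e"
    by simp
  moreover have "z + s *\<^sub>R u \<in> ball z r"
    using s by (simp add: dist_norm)
  ultimately show ?thesis
    using chart unfolding boundary_chart_def by blast
qed

lemma outer_unit_normal_inner_nonpos:
  assumes normal: "outer_unit_normal \<Omega> \<nu>" and z: "z \<in> frontier \<Omega>"
    and ray: "\<forall>\<^sub>F s in at_right 0. z + s *\<^sub>R v \<in> \<Omega>"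
  shows "v \<bullet> \<nu> z \<le> 0"
proof (rule field_le_epsilon)
  fix \<epsilon> :: real
  assume "0 < \<epsilon>"
  define \<epsilon>' where "\<epsilon>' = \<epsilon> / (norm v + 1)"
  have "0 < \<epsilon>'"
    using \<open>0 < \<epsilon>\<close> by (simp add: \<epsilon>'_def add_nonneg_pos)
  then obtain \<delta> where "0 < \<delta>"
    and \<delta>: "\<And>y. y \<in> ball z \<delta> \<Longrightarrow> y \<in> \<Omega> \<Longrightarrow> (y - z) \<bullet> \<nu> z \<le> \<epsilon>' * norm (y - z)"
    using normal z unfolding outer_unit_normal_def by metis
  have "((\<lambda>s. s * norm v) \<longlongrightarrow> 0) (at_right 0)"
    by (auto intro!: tendsto_eq_intros)
  from order_tendstoD(2)[OF this \<open>0 < \<delta>\<close>] eventually_at_right_less ray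
  have "\<forall>\<^sub>F s in at_right 0. 0 < s \<and> s * norm v < \<delta> \<and> z + s *\<^sub>R v \<in> \<Omega>"
    by eventually_elim blast
  then obtain s where s: "0 < s" "s * norm v < \<delta>" "z + s *\<^sub>R v \<in> \<Omega>"
    using eventually_happens trivial_limit_at_right_real by blast
  then have "(s *\<^sub>R v) \<bullet> \<nu> z \<le> \<epsilon>' * norm (s *\<^sub>R v)"
    using \<delta>[of "z + s *\<^sub>R v"] by (simp add: dist_norm)
  then have "v \<bullet> \<nu> z \<le> \<epsilon>' * norm v"
    using \<open>0 < s\<close> by (simp add: mult.left_commute[of s])
  also have "\<dots> \<le> \<epsilon>"
    using \<open>0 < \<epsilon>\<close> pos_divide_le_eq[of "norm v + 1" "\<epsilon> * norm v" \<epsilon>]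
    by (simp add: \<epsilon>'_def add_nonneg_pos)
  finally show "v \<bullet> \<nu> z \<le> 0 + \<epsilon>"
    by simp
qed

lemma unit_vector_eq_sgn:
  fixes m n :: "'a::real_inner"
  assumes n: "norm n = 1" and "m \<noteq> 0"
    and dual: "\<And>u. u \<bullet> m < 0 \<Longrightarrow> u \<bullet> n \<le> 0"
  shows "n = sgn m"
proof -
  define c where "c = (n \<bullet> m) / (m \<bullet> m)"
  define q where "q = n - c *\<^sub>R m"
  have mm: "0 < m \<bullet> m"
    using \<open>m \<noteq> 0\<close> by simp
  have qm: "q \<bullet> m = 0"
    using mm by (simp add: q_def c_def inner_diff_left)
  have c: "0 \<le> c"
    using dual[of "- m"] mm by (simp add: c_def inner_commute)
  have bound: "q \<bullet> q \<le> \<tau> * (m \<bullet> n)" if "0 < \<tau>" for \<tau>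
  proof -
    have "(q - \<tau> *\<^sub>R m) \<bullet> m < 0"
      using qm mm that by (simp add: inner_diff_left)
    then have "(q - \<tau> *\<^sub>R m) \<bullet> n \<le> 0"
      by (rule dual)
    moreover have "q \<bullet> (n - q) = 0"
      using qm by (simp add: q_def)
    then have "q \<bullet> n = q \<bullet> q"
      by (simp add: inner_diff_right)
    ultimately show ?thesis
      by (simp add: inner_diff_left)
  qed
  have "((\<lambda>\<tau>. \<tau> * (m \<bullet> n)) \<longlongrightarrow> 0) (at_right (0::real))"
    by (auto intro!: tendsto_eq_intros)
  moreover have "\<forall>\<^sub>F \<tau> in at_right 0. q \<bullet> q \<le> \<tau> * (m \<bullet> n)"
    using eventually_at_right_less by (rule eventually_mono) (rule bound)
  ultimately have "q \<bullet> q \<le> 0"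
    using trivial_limit_at_right_real by (rule tendsto_lowerbound)
  then have "q = 0"
    using inner_ge_zero[of q] by simp
  then have nm: "n = c *\<^sub>R m"
    by (simp add: q_def)
  then have "c * norm m = 1"
    using n c by simp
  then show ?thesis
    using nm \<open>m \<noteq> 0\<close> by (simp add: sgn_div_norm field_simps)
qed

lemma boundary_chart_outer_unit_normal:
  assumes normal: "outer_unit_normal \<Omega> \<nu>" and z: "z \<in> frontier \<Omega>"
    and chart: "boundary_chart \<Omega> z r M e \<phi> g H" and "0 < r"
  shows "\<nu> z = sgn (chart_normal e g)"
proof (rule unit_vector_eq_sgn)
  show "norm (\<nu> z) = 1"
    using normal z unfolding outer_unit_normal_def by blast
  show "chart_normal e g \<noteq> 0"
    using norm_chart_normal_ge_1[of e g] chart unfolding boundary_chart_def by auto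
next
  fix u
  assume u: "u \<bullet> chart_normal e g < 0"
  have "((\<lambda>s. s * norm u) \<longlongrightarrow> 0) (at_right 0)"
    and "((\<lambda>s. M * s * (norm u)\<^sup>2) \<longlongrightarrow> 0) (at_right 0)"
    by (auto intro!: tendsto_eq_intros)
  moreover have "0 < - (chart_normal e g \<bullet> u)"
    using u by (simp add: inner_commute)
  ultimately have "\<forall>\<^sub>F s in at_right 0. s * norm u < r"
    and "\<forall>\<^sub>F s in at_right 0. M * s * (norm u)\<^sup>2 < - (chart_normal e g \<bullet> u)"
    using \<open>0 < r\<close> order_tendstoD(2) by blast+
  with eventually_at_right_less
  have "\<forall>\<^sub>F s in at_right 0. z + s *\<^sub>R u \<in> \<Omega>"
    by eventually_elim (rule boundary_chart_ray_mem[OF chart])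
  then show "u \<bullet> \<nu> z \<le> 0"
    by (rule outer_unit_normal_inner_nonpos[OF normal z])
qed

lemma uniform_inward_normal_segments:
  assumes dom: "unif_smooth_domain \<Omega>" and normal: "outer_unit_normal \<Omega> \<nu>"
  obtains R where "0 < R" "\<And>z s. z \<in> frontier \<Omega> \<Longrightarrow> 0 < s \<Longrightarrow> s \<le> R \<Longrightarrow> z - s *\<^sub>R \<nu> z \<in> \<Omega>"
proof -
  obtain r M where "0 < r" and charts: "\<And>z. z \<in> frontier \<Omega> \<Longrightarrow> \<exists>e \<phi> g H. boundary_chart \<Omega> z r M e \<phi> g H"
    using unif_smooth_domain_boundary_charts[OF dom] by blast
  define R where "R = min (r / 2) (1 / (2 * (\<bar>M\<bar> + 1)))"
  have "0 < R"
    using \<open>0 < r\<close> by (simp add: R_def add_nonneg_pos)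
  moreover have "z - s *\<^sub>R \<nu> z \<in> \<Omega>" if z: "z \<in> frontier \<Omega>" and s: "0 < s" "s \<le> R" for z s
  proof -
    obtain e \<phi> g H where chart: "boundary_chart \<Omega> z r M e \<phi> g H"
      using charts[OF z] by blast
    have \<nu>: "\<nu> z = sgn (chart_normal e g)"
      by (rule boundary_chart_outer_unit_normal[OF normal z chart \<open>0 < r\<close>])
    have n: "1 \<le> norm (chart_normal e g)"
      using chart norm_chart_normal_ge_1 unfolding boundary_chart_def by blast
    have "norm (\<nu> z) = 1"
      using normal z unfolding outer_unit_normal_def by blast
    moreover have "- (chart_normal e g \<bullet> - \<nu> z) = norm (chart_normal e g)"
      using n by (cases "chart_normal e g = 0")
        (auto simp: \<nu> sgn_div_norm power2_norm_eq_inner[symmetric] power2_eq_square)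
    moreover have "M * s < 1"
    proof -
      have "(\<bar>M\<bar> + 1) * s \<le> 1 / 2"
        using s by (simp add: R_def pos_le_divide_eq add_nonneg_pos field_simps)
      moreover have "M * s \<le> \<bar>M\<bar> * s"
        using s by (intro mult_right_mono) auto
      ultimately show ?thesis
        using s by (simp only: distrib_right)
    qed
    ultimately have "z + s *\<^sub>R (- \<nu> z) \<in> \<Omega>"
      using s n \<open>0 < r\<close> by (intro boundary_chart_ray_mem[OF chart]) (auto simp: R_def)
    then show ?thesis
      by simp
  qed
  ultimately show ?thesis
    using that by blast
qed

lemma outer_unit_normal_at_nearest_point:
  assumes normal: "outer_unit_normal \<Omega> \<nu>" and z: "z \<in> frontier \<Omega>"
    and "x \<noteq> z" and ball: "ball x (dist x z) \<subseteq> \<Omega>"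
  shows "\<nu> z = sgn (z - x)"
proof (rule unit_vector_eq_sgn)
  show "norm (\<nu> z) = 1"
    using normal z unfolding outer_unit_normal_def by blast
  show "z - x \<noteq> 0"
    using \<open>x \<noteq> z\<close> by simp
next
  fix v
  assume v: "v \<bullet> (z - x) < 0"
  have "((\<lambda>s. s * (v \<bullet> v)) \<longlongrightarrow> 0) (at_right 0)"
    by (auto intro!: tendsto_eq_intros)
  moreover have "0 < - 2 * (v \<bullet> (z - x))"
    using v by simp
  ultimately have "\<forall>\<^sub>F s in at_right 0. s * (v \<bullet> v) < - 2 * (v \<bullet> (z - x))"
    by (rule order_tendstoD(2))
  with eventually_at_right_less
  have "\<forall>\<^sub>F s in at_right 0. z + s *\<^sub>R v \<in> \<Omega>"
  proof eventually_elim
    case (elim s)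
    have "(z - x + s *\<^sub>R v) \<bullet> (z - x + s *\<^sub>R v) =
        (z - x) \<bullet> (z - x) + s * (2 * (v \<bullet> (z - x)) + s * (v \<bullet> v))"
      by (simp add: inner_add_left inner_add_right inner_commute algebra_simps)
    also have "\<dots> < (z - x) \<bullet> (z - x)"
      using v elim by (simp add: mult_pos_neg)
    finally have "norm (z - x + s *\<^sub>R v) < norm (z - x)"
      by (simp add: power2_norm_eq_inner[symmetric] power2_less_imp_less)
    then have "z + s *\<^sub>R v \<in> ball x (dist x z)"
      by (simp add: dist_norm norm_minus_commute algebra_simps)
    then show ?case
      using ball by blast
  qed
  then show "v \<bullet> \<nu> z \<le> 0"
    by (rule outer_unit_normal_inner_nonpos[OF normal z])
qed

lemma nearest_frontier_point:
  fixes x y :: "'a::euclidean_space"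
  assumes "open \<Omega>" "x \<in> \<Omega>" "y \<notin> \<Omega>"
  obtains z where "z \<in> frontier \<Omega>" "x \<noteq> z" "dist x z \<le> dist x y" "ball x (dist x z) \<subseteq> \<Omega>"
proof -
  obtain z where "z \<notin> \<Omega>" and nearest: "\<And>w. w \<notin> \<Omega> \<Longrightarrow> dist x z \<le> dist x w"
    using distance_attains_inf[of "- \<Omega>" x] assms by auto
  have ball: "ball x (dist x z) \<subseteq> \<Omega>"
    using nearest by force
  have "x \<noteq> z"
    using \<open>z \<notin> \<Omega>\<close> \<open>x \<in> \<Omega>\<close> by blast
  then have "z \<in> closure (ball x (dist x z))"
    by simp
  then have "z \<in> frontier \<Omega>"
    using closure_mono[OF ball] \<open>z \<notin> \<Omega>\<close> \<open>open \<Omega>\<close> by (auto simp: frontier_def interior_open)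
  then show ?thesis
    using that \<open>x \<noteq> z\<close> nearest[OF \<open>y \<notin> \<Omega>\<close>] ball by blast
qed

lemma nearest_frontier_point_along_normal:
  fixes x y :: "'a::euclidean_space"
  assumes "open \<Omega>" and normal: "outer_unit_normal \<Omega> \<nu>" and "x \<in> \<Omega>" "y \<notin> \<Omega>"
  obtains z d where "z \<in> frontier \<Omega>" "0 < d" "d \<le> dist x y" "x = z - d *\<^sub>R \<nu> z"
    "\<And>\<sigma>. 0 < \<sigma> \<Longrightarrow> \<sigma> \<le> d \<Longrightarrow> z - \<sigma> *\<^sub>R \<nu> z \<in> \<Omega>"
proof -
  obtain z where z: "z \<in> frontier \<Omega>" "x \<noteq> z" "dist x z \<le> dist x y"
    and ball: "ball x (dist x z) \<subseteq> \<Omega>"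
    using nearest_frontier_point[OF \<open>open \<Omega>\<close> \<open>x \<in> \<Omega>\<close> \<open>y \<notin> \<Omega>\<close>] by blast
  define d where "d = dist x z"
  have "0 < d" "d \<le> dist x y"
    using z by (simp_all add: d_def)
  have x: "x = z - d *\<^sub>R \<nu> z"
    using outer_unit_normal_at_nearest_point[OF normal z(1,2) ball] \<open>0 < d\<close>
    by (simp add: d_def sgn_div_norm dist_norm norm_minus_commute)
  have "z - \<sigma> *\<^sub>R \<nu> z \<in> \<Omega>" if "0 < \<sigma>" "\<sigma> \<le> d" for \<sigma>
  proof -
    have "norm (\<nu> z) = 1"
      using normal z unfolding outer_unit_normal_def by blast
    then have "dist x (z - \<sigma> *\<^sub>R \<nu> z) = d - \<sigma>"
      using that by (simp add: x dist_norm flip: scaleR_diff_left)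
    then show ?thesis
      using ball that by (auto simp: d_def)
  qed
  with z(1) \<open>0 < d\<close> \<open>d \<le> dist x y\<close> x show ?thesis
    by (rule that)
qed

section \<open>Estimates along rays\<close>

lemma continuous_on_time_slice:
  assumes "continuous_on (A \<times> UNIV) (\<lambda>(x, t). v x t)"
  shows "continuous_on A (\<lambda>x. v x t)"
proof -
  have "continuous_on A (\<lambda>x. (\<lambda>(x, t). v x t) (x, t))"
    by (rule continuous_on_compose2[OF assms]) (auto intro!: continuous_intros)
  then show ?thesis
    by simp
qed

lemma has_derivative_time_slice:
  assumes "((\<lambda>(y, s). v y s) has_derivative (\<lambda>(h, k). D \<bullet> h + Dt * k)) (at (x, t))"
  shows "((\<lambda>y. v y t) has_derivative (\<lambda>h. D \<bullet> h)) (at x)"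
proof -
  have "((\<lambda>y. (y, t)) has_derivative (\<lambda>h. (h, 0))) (at x)"
    by (auto intro!: derivative_eq_intros)
  from has_derivative_compose[OF this assms] show ?thesis
    by simp
qed

lemma continuous_on_ray:
  fixes z u :: "'a::real_normed_vector"
  assumes "continuous_on A f" "z \<in> A" "\<And>s. 0 < s \<Longrightarrow> s \<le> S \<Longrightarrow> z + s *\<^sub>R u \<in> A"
  shows "continuous_on {0..S} (\<lambda>s. f (z + s *\<^sub>R u))"
proof (rule continuous_on_compose2[OF assms(1)])
  show "continuous_on {0..S} (\<lambda>s. z + s *\<^sub>R u)"
    by (auto intro!: continuous_intros)
  show "(\<lambda>s. z + s *\<^sub>R u) ` {0..S} \<subseteq> A"
    using assms(2,3) by (force simp: le_less)
qed

lemma lipschitz_to_endpoint: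
  fixes g :: "real \<Rightarrow> real"
  assumes "0 < S" and cont: "continuous_on {0..S} g"
    and lip: "\<And>s. 0 < s \<Longrightarrow> s \<le> S \<Longrightarrow> \<bar>g S - g s\<bar> \<le> L * (S - s)"
  shows "\<bar>g S - g 0\<bar> \<le> L * S"
proof -
  have "((\<lambda>s. L * (S - s)) \<longlongrightarrow> L * S) (at_right 0)"
    by (auto intro!: tendsto_eq_intros)
  moreover have "(g \<longlongrightarrow> g 0) (at_right 0)"
    using cont \<open>0 < S\<close> by (simp add: continuous_on_Icc_at_rightD)
  then have "((\<lambda>s. \<bar>g S - g s\<bar>) \<longlongrightarrow> \<bar>g S - g 0\<bar>) (at_right 0)"
    by (intro tendsto_intros)
  moreover have "\<forall>\<^sub>F s in at_right 0. \<bar>g S - g s\<bar> \<le> L * (S - s)"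
    using \<open>0 < S\<close> lip by (auto simp: eventually_at_right_field)
  ultimately show ?thesis
    by (rule tendsto_le[OF trivial_limit_at_right_real])
qed

lemma closed_segment_on_ray:
  "closed_segment (z + a *\<^sub>R u) (z + b *\<^sub>R u) = (\<lambda>s. z + s *\<^sub>R u) ` closed_segment a b"
proof -
  have "closed_segment (a *\<^sub>R u) (b *\<^sub>R u) = (\<lambda>s. s *\<^sub>R u) ` closed_segment a b"
    by (rule closed_segment_linear_image) (rule linear_scaleR_left)
  then show ?thesis
    by (simp add: closed_segment_translation image_image)
qed

lemma ray_lipschitz_estimate:
  fixes f :: "'a::real_normed_vector \<Rightarrow> real"
  assumes "0 < S" and "norm u = 1" and cont: "continuous_on {0..S} (\<lambda>s. f (z + s *\<^sub>R u))"
    and ray: "\<And>s. 0 < s \<Longrightarrow> s \<le> S \<Longrightarrow> z + s *\<^sub>R u \<in> U"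
    and lip: "\<And>a b. closed_segment a b \<subseteq> U \<Longrightarrow> \<bar>f a - f b\<bar> \<le> L * dist a b"
  shows "\<bar>f (z + S *\<^sub>R u) - f z\<bar> \<le> L * S"
proof -
  have "\<bar>f (z + S *\<^sub>R u) - f (z + s *\<^sub>R u)\<bar> \<le> L * (S - s)" if "0 < s" "s \<le> S" for s
  proof -
    have "closed_segment (z + S *\<^sub>R u) (z + s *\<^sub>R u) \<subseteq> U"
      using that ray by (auto simp: closed_segment_on_ray closed_segment_eq_real_ivl)
    moreover have "dist (z + S *\<^sub>R u) (z + s *\<^sub>R u) = S - s"
      using that \<open>norm u = 1\<close> by (simp add: dist_norm flip: scaleR_diff_left)
    ultimately show ?thesis
      using lip by metis
  qed
  then show ?thesis
    using lipschitz_to_endpoint[OF \<open>0 < S\<close> cont, of L] by simp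
qed

lemma ray_first_order_estimate:
  fixes f :: "'a::real_inner \<Rightarrow> real"
  assumes "0 < S" and cont: "continuous_on {0..S} (\<lambda>s. f (z + s *\<^sub>R u))"
    and deriv: "\<And>s. 0 < s \<Longrightarrow> s < S \<Longrightarrow> (f has_derivative (\<lambda>h. D (z + s *\<^sub>R u) \<bullet> h)) (at (z + s *\<^sub>R u))"
    and close: "\<And>s. 0 < s \<Longrightarrow> s < S \<Longrightarrow> \<bar>D (z + s *\<^sub>R u) \<bullet> u - D z \<bullet> u\<bar> \<le> \<eta>"
  shows "\<bar>f (z + S *\<^sub>R u) - f z - S * (D z \<bullet> u)\<bar> \<le> S * \<eta>"
proof -
  define \<psi> where "\<psi> s = f (z + s *\<^sub>R u) - s * (D z \<bullet> u)" for s
  have cont_\<psi>: "continuous_on {0..S} \<psi>"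
    unfolding \<psi>_def by (intro continuous_intros cont)
  have deriv_\<psi>: "(\<psi> has_derivative (\<lambda>h. h * (D (z + s *\<^sub>R u) \<bullet> u - D z \<bullet> u))) (at s)"
    if "0 < s" "s < S" for s
  proof -
    have "((\<lambda>s. z + s *\<^sub>R u) has_derivative (\<lambda>h. h *\<^sub>R u)) (at s)"
      by (auto intro!: derivative_eq_intros)
    from has_derivative_compose[OF this deriv[OF that]]
    have "((\<lambda>s. f (z + s *\<^sub>R u)) has_derivative (\<lambda>h. D (z + s *\<^sub>R u) \<bullet> (h *\<^sub>R u))) (at s)" .
    then show ?thesis
      unfolding \<psi>_def by (auto intro!: derivative_eq_intros simp: algebra_simps)
  qed
  obtain \<xi> where "0 < \<xi>" "\<xi> < S"
    and "\<psi> S - \<psi> 0 = (S - 0) * (D (z + \<xi> *\<^sub>R u) \<bullet> u - D z \<bullet> u)"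
    using mvt[OF \<open>0 < S\<close> cont_\<psi> deriv_\<psi>] by blast
  then have "\<bar>\<psi> S - \<psi> 0\<bar> \<le> S * \<eta>"
    using close[of \<xi>] \<open>0 < S\<close> by (simp add: abs_mult mult_left_mono)
  then show ?thesis
    by (simp add: \<psi>_def algebra_simps)
qed

section \<open>The comparison argument\<close>

text \<open>The arithmetic core of the estimate near the boundary, for \<open>x = z - d \<nu>(z)\<close> and
  \<open>w = z - s \<nu>(z)\<close>: \<open>v1x, v1z, v2x, v2z, v2w\<close> are the values of \<open>v\<^sub>1, v\<^sub>2\<close> at \<open>x, z, w\<close> and
  \<open>n = \<partial>\<^sub>\<nu>v\<^sub>2(z)\<close>.\<close>

lemma boundary_layer_inequality_steep:
  fixes v1x v1z v2x v2z n d L k \<delta> :: real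
  assumes v1x: "v1x \<le> v1z + L * d" and bdry: "v1z \<le> v2z" and steep: "n \<le> - \<delta> / 2"
    and v2x: "\<bar>v2x - v2z + d * n\<bar> \<le> d * \<delta> / 8"
    and "0 \<le> v2z" "0 < \<delta>" "0 < d" "1 \<le> k" "4 * L \<le> k * \<delta>"
  shows "v1x \<le> k * v2x"
proof -
  have "d * n \<le> - (d * \<delta>) / 2"
    using mult_left_mono[OF steep, of d] \<open>0 < d\<close> by simp
  then have v2x_low: "v2z + 3 * (d * \<delta>) / 8 \<le> v2x"
    using v2x by linarith
  have "L * d \<le> k * (3 * (d * \<delta>) / 8)"
  proof -
    have "4 * L * d \<le> k * \<delta> * d"
      using assms by (intro mult_right_mono) auto
    moreover have "0 \<le> k * \<delta> * d"
      using assms by simp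
    ultimately show ?thesis
      by (simp add: field_simps)
  qed
  moreover have "v2z \<le> k * v2z"
    using assms by (simp add: mult_le_cancel_right1)
  ultimately have "v1x \<le> k * v2z + k * (3 * (d * \<delta>) / 8)"
    using v1x bdry by linarith
  also have "\<dots> = k * (v2z + 3 * (d * \<delta>) / 8)"
    by (simp add: distrib_left)
  also have "\<dots> \<le> k * v2x"
    using v2x_low \<open>1 \<le> k\<close> by (intro mult_left_mono) auto
  finally show ?thesis .
qed

lemma boundary_layer_inequality_shallow:
  fixes v1x v1z v2x v2z v2w n d s L B k \<delta> :: real
  assumes v1x: "v1x \<le> v1z + L * d" and gap: "v1z - v2z < - \<delta> / 2"
    and v2x: "\<bar>v2x - v2z + d * n\<bar> \<le> d * \<delta> / 8"
    and v2w: "\<bar>v2w - v2z + s * n\<bar> \<le> s * \<delta> / 8"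
    and pos: "0 < v2w" "0 \<le> v2z" "0 \<le> v2x" "0 < \<delta>"
    and d: "0 < d" "2 * d \<le> s" "s \<le> 1 / 4" "L * d \<le> \<delta> / 4"
    and B: "v1x \<le> B" and k: "0 \<le> k" "16 * B \<le> k * \<delta>"
  shows "v1x \<le> k * v2x"
proof (cases "v1x \<le> 0")
  case True
  moreover have "0 \<le> k * v2x"
    using k pos by simp
  ultimately show ?thesis
    by linarith
next
  case False
  then have v2z_low: "\<delta> / 4 < v2z"
    using v1x gap d by linarith
  have "2 * (d * n) \<le> v2z + s * \<delta> / 8"
  proof (cases "n \<le> 0")
    case True
    then have "d * n \<le> 0"
      using d by (simp add: mult_nonneg_nonpos)
    moreover have "0 \<le> s * \<delta>"
      using d pos by simp
    ultimately show ?thesis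
      using pos by linarith
  next
    case False
    then have "2 * (d * n) \<le> s * n"
      using mult_right_mono[OF d(2), of n] by simp
    moreover have "s * n \<le> v2z + s * \<delta> / 8"
      using v2w pos by linarith
    ultimately show ?thesis
      by simp
  qed
  moreover have "s * \<delta> \<le> \<delta> / 4" and "d * \<delta> \<le> \<delta> / 8"
    using d pos by (auto intro!: mult_right_mono[of _ _ \<delta>, simplified])
  ultimately have "\<delta> / 16 \<le> v2x"
    using v2x v2z_low by linarith
  then have "k * (\<delta> / 16) \<le> k * v2x"
    using k by (intro mult_left_mono) auto
  then show ?thesis
    using B k by linarith
qed

lemma boundary_layer_inequality:
  fixes v1x v1z v2x v2z v2w n d s L B k \<delta> :: real
  assumes v1x: "v1x \<le> v1z + L * d" and bdry: "v1z \<le> v2z"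
    and sup: "v1z - v2z + min n 0 \<le> - \<delta>"
    and v2x: "\<bar>v2x - v2z + d * n\<bar> \<le> d * \<delta> / 8"
    and v2w: "\<bar>v2w - v2z + s * n\<bar> \<le> s * \<delta> / 8"
    and pos: "0 < v2w" "0 \<le> v2z" "0 \<le> v2x" "0 < \<delta>"
    and d: "0 < d" "2 * d \<le> s" "s \<le> 1 / 4" "L * d \<le> \<delta> / 4"
    and B: "v1x \<le> B"
    and k: "1 \<le> k" "4 * L \<le> k * \<delta>" "16 * B \<le> k * \<delta>"
  shows "v1x \<le> k * v2x"
proof (cases "n \<le> - \<delta> / 2")
  case True
  then show ?thesis
    using boundary_layer_inequality_steep[OF v1x bdry True v2x] pos d k by blast
next
  case False
  then have "v1z - v2z < - \<delta> / 2"
    using sup pos by (auto simp: min_def split: if_splits)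
  then show ?thesis
    using boundary_layer_inequality_shallow[OF v1x _ v2x v2w pos d B] k by simp
qed

locale comparison_setting =
  fixes \<Omega> :: "'a::euclidean_space set" and \<nu> :: "'a \<Rightarrow> 'a"
    and v1 v2 :: "'a \<Rightarrow> real \<Rightarrow> real" and Dv2 :: "'a \<Rightarrow> real \<Rightarrow> 'a" and Dtv2 :: "'a \<Rightarrow> real \<Rightarrow> real"
  assumes dom: "unif_smooth_domain \<Omega>"
    and normal: "outer_unit_normal \<Omega> \<nu>"
    and v1_W1inf: "W1inf v1 \<Omega>"
    and v1_cont: "continuous_on (closure \<Omega> \<times> UNIV) (\<lambda>(x, t). v1 x t)"
    and v2_deriv: "\<forall>x\<in>\<Omega>. \<forall>t. ((\<lambda>(y, s). v2 y s) has_derivative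
                      (\<lambda>(h, k). Dv2 x t \<bullet> h + Dtv2 x t * k)) (at (x, t))"
    and v2_cont: "continuous_on (closure \<Omega> \<times> UNIV) (\<lambda>(x, t). v2 x t)"
    and bdry_le: "\<forall>z\<in>frontier \<Omega>. \<forall>t. v1 z t \<le> v2 z t"
    and Dv2_unif: "uniformly_continuous_on (closure \<Omega> \<times> UNIV) (\<lambda>(x, t). Dv2 x t)"
    and sup_neg: "\<exists>\<delta>>0. \<forall>z\<in>frontier \<Omega>. \<forall>t.
                    v1 z t - v2 z t + min (\<nu> z \<bullet> Dv2 z t) 0 \<le> - \<delta>"
    and inf_pos: "\<forall>\<epsilon>>0. \<exists>c>0. \<forall>x t. cball x \<epsilon> \<subseteq> \<Omega> \<longrightarrow> c \<le> v2 x t"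
begin

lemma open_domain: "open \<Omega>"
  using dom unfolding unif_smooth_domain_def by blast

lemma v2_pos:
  assumes "x \<in> \<Omega>"
  shows "0 < v2 x t"
proof -
  obtain \<epsilon> where "0 < \<epsilon>" and ball: "cball x \<epsilon> \<subseteq> \<Omega>"
    using open_domain assms open_contains_cball by blast
  then obtain c where "0 < c" and "\<And>x t. cball x \<epsilon> \<subseteq> \<Omega> \<Longrightarrow> c \<le> v2 x t"
    using inf_pos by blast
  then show ?thesis
    using ball by (meson less_le_trans)
qed

lemma v2_nonneg:
  assumes "x \<in> closure \<Omega>"
  shows "0 \<le> v2 x t"
  using continuous_on_time_slice[OF v2_cont] assms
  by (rule continuous_ge_on_closure) (simp add: v2_pos less_imp_le)

lemma v1_upper_bound:
  obtains B where "\<And>x t. x \<in> \<Omega> \<Longrightarrow> v1 x t \<le> B"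
  using v1_W1inf unfolding W1inf_def by (meson abs_le_D1)

lemma v1_lipschitz:
  obtains L where "0 \<le> L" "\<And>a b t. closed_segment a b \<subseteq> \<Omega> \<Longrightarrow> \<bar>v1 a t - v1 b t\<bar> \<le> L * dist a b"
proof -
  obtain L where L: "\<And>p q. closed_segment p q \<subseteq> \<Omega> \<times> UNIV \<Longrightarrow>
      \<bar>v1 (fst p) (snd p) - v1 (fst q) (snd q)\<bar> \<le> L * dist p q"
    using v1_W1inf unfolding W1inf_def by blast
  have "\<bar>v1 a t - v1 b t\<bar> \<le> \<bar>L\<bar> * dist a b" if "closed_segment a b \<subseteq> \<Omega>" for a b t
  proof -
    have "closed_segment (a, t) (b, t) \<subseteq> \<Omega> \<times> UNIV"
      using that by (auto dest: closed_segment_PairD)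
    then have "\<bar>v1 a t - v1 b t\<bar> \<le> L * dist a b"
      using L by (fastforce simp: dist_Pair_Pair)
    also have "\<dots> \<le> \<bar>L\<bar> * dist a b"
      by (intro mult_right_mono) auto
    finally show ?thesis .
  qed
  then show ?thesis
    using that[of "\<bar>L\<bar>"] by simp
qed

lemma uniform_normal_segments:
  assumes "0 < \<eta>"
  obtains s where "0 < s" "s \<le> 1 / 4"
    "\<And>z \<sigma>. z \<in> frontier \<Omega> \<Longrightarrow> 0 < \<sigma> \<Longrightarrow> \<sigma> \<le> s \<Longrightarrow> z - \<sigma> *\<^sub>R \<nu> z \<in> \<Omega>"
    "\<And>z \<sigma> t. z \<in> frontier \<Omega> \<Longrightarrow> 0 < \<sigma> \<Longrightarrow> \<sigma> \<le> s \<Longrightarrow> norm (Dv2 (z - \<sigma> *\<^sub>R \<nu> z) t - Dv2 z t) \<le> \<eta>"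
proof -
  obtain R where "0 < R" and inward: "\<And>z s. z \<in> frontier \<Omega> \<Longrightarrow> 0 < s \<Longrightarrow> s \<le> R \<Longrightarrow> z - s *\<^sub>R \<nu> z \<in> \<Omega>"
    using uniform_inward_normal_segments[OF dom normal] by blast
  obtain \<rho> where "0 < \<rho>" and \<rho>: "\<And>p q. p \<in> closure \<Omega> \<times> UNIV \<Longrightarrow> q \<in> closure \<Omega> \<times> UNIV \<Longrightarrow>
      dist q p < \<rho> \<Longrightarrow> dist ((\<lambda>(x, t). Dv2 x t) q) ((\<lambda>(x, t). Dv2 x t) p) < \<eta>"
    using Dv2_unif \<open>0 < \<eta>\<close> unfolding uniformly_continuous_on_def by metis
  define s where "s = min (min R (\<rho> / 2)) (1 / 4)"
  have "norm (Dv2 (z - \<sigma> *\<^sub>R \<nu> z) t - Dv2 z t) \<le> \<eta>"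
    if z: "z \<in> frontier \<Omega>" and \<sigma>: "0 < \<sigma>" "\<sigma> \<le> s" for z \<sigma> t
  proof -
    have "norm (\<nu> z) = 1"
      using normal z unfolding outer_unit_normal_def by blast
    then have "dist (z - \<sigma> *\<^sub>R \<nu> z, t) (z, t) < \<rho>"
      using \<sigma> \<open>0 < \<rho>\<close> by (simp add: dist_Pair_Pair dist_norm s_def)
    moreover have "z - \<sigma> *\<^sub>R \<nu> z \<in> closure \<Omega>" "z \<in> closure \<Omega>"
      using inward[OF z \<sigma>(1)] \<sigma>(2) closure_subset z closure_Un_frontier by (auto simp: s_def)
    ultimately show ?thesis
      using \<rho>[of "(z, t)" "(z - \<sigma> *\<^sub>R \<nu> z, t)"] by (simp add: dist_norm)
  qed
  moreover have "0 < s" "s \<le> 1 / 4" "s \<le> R"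
    using \<open>0 < R\<close> \<open>0 < \<rho>\<close> by (auto simp: s_def)
  ultimately show ?thesis
    using that inward by (meson order_trans)
qed

lemma v2_normal_expansion:
  assumes z: "z \<in> frontier \<Omega>" and "0 < s"
    and inside: "\<And>\<sigma>. 0 < \<sigma> \<Longrightarrow> \<sigma> \<le> s \<Longrightarrow> z - \<sigma> *\<^sub>R \<nu> z \<in> \<Omega>"
    and close: "\<And>\<sigma>. 0 < \<sigma> \<Longrightarrow> \<sigma> \<le> s \<Longrightarrow> norm (Dv2 (z - \<sigma> *\<^sub>R \<nu> z) t - Dv2 z t) \<le> \<eta>"
  shows "\<bar>v2 (z - s *\<^sub>R \<nu> z) t - v2 z t + s * (\<nu> z \<bullet> Dv2 z t)\<bar> \<le> s * \<eta>"
proof -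
  define u where "u = - \<nu> z"
  have u: "norm u = 1"
    using normal z unfolding outer_unit_normal_def u_def by simp
  have ray: "z + \<sigma> *\<^sub>R u \<in> \<Omega>" if "0 < \<sigma>" "\<sigma> \<le> s" for \<sigma>
    using inside[OF that] by (simp add: u_def)
  have "\<bar>v2 (z + s *\<^sub>R u) t - v2 z t - s * (Dv2 z t \<bullet> u)\<bar> \<le> s * \<eta>"
  proof (rule ray_first_order_estimate[OF \<open>0 < s\<close>])
    have "z \<in> closure \<Omega>"
      using z closure_Un_frontier by blast
    then show "continuous_on {0..s} (\<lambda>\<sigma>. v2 (z + \<sigma> *\<^sub>R u) t)"
      using ray closure_subset by (intro continuous_on_ray[OF continuous_on_time_slice[OF v2_cont]]) auto
    show "((\<lambda>x. v2 x t) has_derivative (\<lambda>h. Dv2 (z + \<sigma> *\<^sub>R u) t \<bullet> h)) (at (z + \<sigma> *\<^sub>R u))"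
      if "0 < \<sigma>" "\<sigma> < s" for \<sigma>
      using v2_deriv ray[of \<sigma>] that by (intro has_derivative_time_slice) auto
    show "\<bar>Dv2 (z + \<sigma> *\<^sub>R u) t \<bullet> u - Dv2 z t \<bullet> u\<bar> \<le> \<eta>" if "0 < \<sigma>" "\<sigma> < s" for \<sigma>
    proof -
      have "\<bar>(Dv2 (z + \<sigma> *\<^sub>R u) t - Dv2 z t) \<bullet> u\<bar> \<le> norm (Dv2 (z + \<sigma> *\<^sub>R u) t - Dv2 z t)"
        using Cauchy_Schwarz_ineq2[of "Dv2 (z + \<sigma> *\<^sub>R u) t - Dv2 z t" u] u by simp
      also have "\<dots> \<le> \<eta>"
        using close[of \<sigma>] that by (simp add: u_def)
      finally show ?thesis
        by (simp add: inner_diff_left)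
    qed
  qed
  then show ?thesis
    by (simp add: u_def inner_commute)
qed

lemma v1_normal_increment:
  assumes z: "z \<in> frontier \<Omega>" and "0 < s"
    and inside: "\<And>\<sigma>. 0 < \<sigma> \<Longrightarrow> \<sigma> \<le> s \<Longrightarrow> z - \<sigma> *\<^sub>R \<nu> z \<in> \<Omega>"
    and lip: "\<And>a b. closed_segment a b \<subseteq> \<Omega> \<Longrightarrow> \<bar>v1 a t - v1 b t\<bar> \<le> L * dist a b"
  shows "v1 (z - s *\<^sub>R \<nu> z) t \<le> v1 z t + L * s"
proof -
  define u where "u = - \<nu> z"
  have ray: "z + \<sigma> *\<^sub>R u \<in> \<Omega>" if "0 < \<sigma>" "\<sigma> \<le> s" for \<sigma>
    using inside[OF that] by (simp add: u_def)
  have "\<bar>v1 (z + s *\<^sub>R u) t - v1 z t\<bar> \<le> L * s"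
  proof (rule ray_lipschitz_estimate[OF \<open>0 < s\<close>, where U = \<Omega>])
    show "norm u = 1"
      using normal z unfolding outer_unit_normal_def u_def by simp
    have "z \<in> closure \<Omega>"
      using z closure_Un_frontier by blast
    then show "continuous_on {0..s} (\<lambda>\<sigma>. v1 (z + \<sigma> *\<^sub>R u) t)"
      using ray closure_subset by (intro continuous_on_ray[OF continuous_on_time_slice[OF v1_cont]]) auto
  qed (use ray lip in auto)
  then show ?thesis
    by (simp add: u_def)
qed

lemma boundary_layer_bound:
  obtains \<epsilon> k where "0 < \<epsilon>" "0 < k" "\<And>x t. x \<in> \<Omega> \<Longrightarrow> \<not> cball x \<epsilon> \<subseteq> \<Omega> \<Longrightarrow> v1 x t \<le> k * v2 x t"
proof -
  obtain \<delta> where "0 < \<delta>"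
    and \<delta>: "\<And>z t. z \<in> frontier \<Omega> \<Longrightarrow> v1 z t - v2 z t + min (\<nu> z \<bullet> Dv2 z t) 0 \<le> - \<delta>"
    using sup_neg by blast
  obtain B where B: "\<And>x t. x \<in> \<Omega> \<Longrightarrow> v1 x t \<le> B"
    using v1_upper_bound by blast
  obtain L where "0 \<le> L" and lip: "\<And>a b t. closed_segment a b \<subseteq> \<Omega> \<Longrightarrow> \<bar>v1 a t - v1 b t\<bar> \<le> L * dist a b"
    using v1_lipschitz by blast
  obtain s where "0 < s" "s \<le> 1 / 4"
    and inside: "\<And>z \<sigma>. z \<in> frontier \<Omega> \<Longrightarrow> 0 < \<sigma> \<Longrightarrow> \<sigma> \<le> s \<Longrightarrow> z - \<sigma> *\<^sub>R \<nu> z \<in> \<Omega>"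
    and close: "\<And>z \<sigma> t. z \<in> frontier \<Omega> \<Longrightarrow> 0 < \<sigma> \<Longrightarrow> \<sigma> \<le> s \<Longrightarrow>
      norm (Dv2 (z - \<sigma> *\<^sub>R \<nu> z) t - Dv2 z t) \<le> \<delta> / 8"
    using uniform_normal_segments[of "\<delta> / 8"] \<open>0 < \<delta>\<close> by auto
  define \<epsilon> where "\<epsilon> = min (s / 2) (\<delta> / (4 * (L + 1)))"
  define k where "k = max 1 (max (4 * L / \<delta>) (16 * B / \<delta>))"
  have k: "1 \<le> k" "4 * L \<le> k * \<delta>" "16 * B \<le> k * \<delta>"
    using \<open>0 < \<delta>\<close> by (auto simp: k_def pos_divide_le_eq max_def)
  have L\<epsilon>: "L * d \<le> \<delta> / 4" if "0 < d" "d \<le> \<epsilon>" for d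
  proof -
    have "L * d \<le> (L + 1) * (\<delta> / (4 * (L + 1)))"
      using that \<open>0 \<le> L\<close> by (intro mult_mono) (auto simp: \<epsilon>_def)
    also have "\<dots> = \<delta> / 4"
      using \<open>0 \<le> L\<close> by (simp add: field_simps)
    finally show ?thesis .
  qed
  have "v1 x t \<le> k * v2 x t" if x: "x \<in> \<Omega>" "\<not> cball x \<epsilon> \<subseteq> \<Omega>" for x t
  proof -
    obtain y where "y \<notin> \<Omega>" "dist x y \<le> \<epsilon>"
      using x(2) by (auto simp: subset_iff)
    obtain z d where z: "z \<in> frontier \<Omega>" and "0 < d" "d \<le> dist x y" and x_eq: "x = z - d *\<^sub>R \<nu> z"
      and inside_d: "\<And>\<sigma>. 0 < \<sigma> \<Longrightarrow> \<sigma> \<le> d \<Longrightarrow> z - \<sigma> *\<^sub>R \<nu> z \<in> \<Omega>"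
      using nearest_frontier_point_along_normal[OF open_domain normal x(1) \<open>y \<notin> \<Omega>\<close>] by metis
    have "d \<le> \<epsilon>"
      using \<open>d \<le> dist x y\<close> \<open>dist x y \<le> \<epsilon>\<close> by linarith
    then have "2 * d \<le> s"
      by (simp add: \<epsilon>_def)
    have expansion_x: "\<bar>v2 x t - v2 z t + d * (\<nu> z \<bullet> Dv2 z t)\<bar> \<le> d * \<delta> / 8"
      using v2_normal_expansion[OF z \<open>0 < d\<close> inside_d close[OF z]] \<open>2 * d \<le> s\<close> x_eq by simp
    have expansion_s: "\<bar>v2 (z - s *\<^sub>R \<nu> z) t - v2 z t + s * (\<nu> z \<bullet> Dv2 z t)\<bar> \<le> s * \<delta> / 8"
      using v2_normal_expansion[OF z \<open>0 < s\<close> inside[OF z] close[OF z]] by simp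
    have increment: "v1 x t \<le> v1 z t + L * d"
      using v1_normal_increment[OF z \<open>0 < d\<close> inside_d lip] x_eq by simp
    have "0 \<le> v2 z t"
      using z closure_Un_frontier v2_nonneg by blast
    show ?thesis
      by (rule boundary_layer_inequality[OF increment bdry_le[rule_format, OF z] \<delta>[OF z]
            expansion_x expansion_s v2_pos[OF inside[OF z \<open>0 < s\<close> order_refl]] \<open>0 \<le> v2 z t\<close>
            less_imp_le[OF v2_pos[OF x(1)]] \<open>0 < \<delta>\<close> \<open>0 < d\<close> \<open>2 * d \<le> s\<close> \<open>s \<le> 1 / 4\<close> L\<epsilon>[OF \<open>0 < d\<close> \<open>d \<le> \<epsilon>\<close>]
            B[OF x(1)] k])
  qed
  moreover have "0 < \<epsilon>"
    using \<open>0 < s\<close> \<open>0 < \<delta>\<close> \<open>0 \<le> L\<close> by (simp add: \<epsilon>_def)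
  ultimately show ?thesis
    using that[of \<epsilon> k] k by simp
qed

lemma interior_bound:
  assumes "0 < \<epsilon>"
  obtains k where "0 < k" "\<And>x t. cball x \<epsilon> \<subseteq> \<Omega> \<Longrightarrow> v1 x t \<le> k * v2 x t"
proof -
  obtain c where "0 < c" and c: "\<And>x t. cball x \<epsilon> \<subseteq> \<Omega> \<Longrightarrow> c \<le> v2 x t"
    using inf_pos assms by blast
  obtain B where B: "\<And>x t. x \<in> \<Omega> \<Longrightarrow> v1 x t \<le> B"
    using v1_upper_bound by blast
  define k where "k = max 1 (B / c)"
  have "v1 x t \<le> k * v2 x t" if "cball x \<epsilon> \<subseteq> \<Omega>" for x t
  proof -
    have "x \<in> \<Omega>"
      using that assms by auto
    have "B \<le> k * c"
      using \<open>0 < c\<close> by (simp add: k_def pos_divide_le_eq max_def)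
    also have "\<dots> \<le> k * v2 x t"
      using c[OF that] by (intro mult_left_mono) (auto simp: k_def)
    finally show ?thesis
      using B[OF \<open>x \<in> \<Omega>\<close>, of t] by linarith
  qed
  then show ?thesis
    using that[of k] by (simp add: k_def)
qed

end

theorem mainTheorem13:
  fixes \<Omega> :: "'a::euclidean_space set"
    and \<nu> :: "'a \<Rightarrow> 'a"
    and v1 v2 :: "'a \<Rightarrow> real \<Rightarrow> real"
    and Dv2 :: "'a \<Rightarrow> real \<Rightarrow> 'a"
    and Dtv2 :: "'a \<Rightarrow> real \<Rightarrow> real"
  assumes dom: "unif_smooth_domain \<Omega>"
    and normal: "outer_unit_normal \<Omega> \<nu>"
    and v1_W1inf: "W1inf v1 \<Omega>"
    and v1_cont: "continuous_on (closure \<Omega> \<times> UNIV) (\<lambda>(x, t). v1 x t)"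
    and v2_deriv: "\<forall>x\<in>\<Omega>. \<forall>t. ((\<lambda>(y, s). v2 y s) has_derivative
                      (\<lambda>(h, k). Dv2 x t \<bullet> h + Dtv2 x t * k)) (at (x, t))"
    and v2_cont: "continuous_on (closure \<Omega> \<times> UNIV) (\<lambda>(x, t). v2 x t)"
    and Dv2_cont: "continuous_on (closure \<Omega> \<times> UNIV) (\<lambda>(x, t). Dv2 x t)"
    and Dtv2_cont: "continuous_on (closure \<Omega> \<times> UNIV) (\<lambda>(x, t). Dtv2 x t)"
    and bdry_le: "\<forall>z\<in>frontier \<Omega>. \<forall>t. v1 z t \<le> v2 z t"
    and Dv2_unif: "uniformly_continuous_on (closure \<Omega> \<times> UNIV) (\<lambda>(x, t). Dv2 x t)"
    and sup_neg: "\<exists>\<delta>>0. \<forall>z\<in>frontier \<Omega>. \<forall>t.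
                    v1 z t - v2 z t + min (\<nu> z \<bullet> Dv2 z t) 0 \<le> - \<delta>"
    and inf_pos: "\<forall>\<epsilon>>0. \<exists>c>0. \<forall>x t. cball x \<epsilon> \<subseteq> \<Omega> \<longrightarrow> c \<le> v2 x t"
  shows "\<exists>k>0. \<forall>x\<in>\<Omega>. \<forall>t. v1 x t \<le> k * v2 x t"
proof -
  interpret comparison_setting \<Omega> \<nu> v1 v2 Dv2 Dtv2
    using dom normal v1_W1inf v1_cont v2_deriv v2_cont bdry_le Dv2_unif sup_neg inf_pos
    by unfold_locales
  obtain \<epsilon> k\<^sub>1 where "0 < \<epsilon>" "0 < k\<^sub>1"
    and near: "\<And>x t. x \<in> \<Omega> \<Longrightarrow> \<not> cball x \<epsilon> \<subseteq> \<Omega> \<Longrightarrow> v1 x t \<le> k\<^sub>1 * v2 x t"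
    using boundary_layer_bound by blast
  obtain k\<^sub>2 where "0 < k\<^sub>2" and far: "\<And>x t. cball x \<epsilon> \<subseteq> \<Omega> \<Longrightarrow> v1 x t \<le> k\<^sub>2 * v2 x t"
    using interior_bound[OF \<open>0 < \<epsilon>\<close>] by blast
  have "v1 x t \<le> max k\<^sub>1 k\<^sub>2 * v2 x t" if "x \<in> \<Omega>" for x t
  proof -
    have "k\<^sub>1 * v2 x t \<le> max k\<^sub>1 k\<^sub>2 * v2 x t" "k\<^sub>2 * v2 x t \<le> max k\<^sub>1 k\<^sub>2 * v2 x t"
      using v2_pos[OF that] by (simp_all add: mult_right_mono)
    then show ?thesis
      using near[OF that] far by (cases "cball x \<epsilon> \<subseteq> \<Omega>") (auto intro: order_trans)
  qed
  then show ?thesis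
    using \<open>0 < k\<^sub>1\<close> by (intro exI[of _ "max k\<^sub>1 k\<^sub>2"]) auto
qed

end
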